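(* Let $x_1,\dots,x_n\in\mathbb{R}^d$ and $y_1,\dots,y_n\in\{0,1\}$, let $R>0$ satisfy $\|x_i\|_2\le R$ for all $i$, let $\ell(\beta)=\sum_{i=1}^n\{y_ix_i^T\beta-\log(1+e^{x_i^T\beta})\}$ and let $\hat\beta$ be a maximizer of $\ell$. Let $L\ge1$ be an integer, $z_1,\dots,z_L\in\mathbb{R}$, $F_L(a)=L^{-1}\sum_{l=1}^L1\{a\ge z_l\}$, and $\nabla\tilde\ell(\beta)=\sum_{i=1}^n\{x_iy_i-x_iF_L(x_i^T\beta)\}$. Suppose $\beta\in\mathbb{R}^d$ satisfies $\|\nabla\tilde\ell(\beta)\|_2\le nRL^{-1}$. Let $\hat\lambda_{\min}$ be the smallest eigenvalue of the Fisher information matrix $I(\cdot)=-n^{-1}\nabla^2\ell(\cdot)$ over the line segment between $\beta$ and $\hat\beta$, i.e. $\hat\lambda_{\min}=\inf_{a\in[0,1]}\lambda_{\min}\bigl(I(a\beta+(1-a)\hat\beta)\bigr)$, and suppose $\hat\lambda_{\min}>0$. Then $$\|\beta-\hat\beta\|_2\le\frac{R\bigl(L^{-1}+\sup_{a\in\mathbb{R}}|F_L(a)-\sigma(a)|\bigr)}{\hat\lambda_{\min}},$$ where $\sigma(a)=(1+e^{-a})^{-1}$.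
   Context: $\nabla^2\ell(\beta)=-\sum_i\sigma(x_i^T\beta)(1-\sigma(x_i^T\beta))x_ix_i^T$ is the Hessian of the logistic log-likelihood $\ell$. $\nabla\tilde\ell$ is the approximate gradient in which the logistic function $\sigma$ is replaced by the empirical CDF $F_L$ of the points $z_1,\dots,z_L$ (in the paper, independent logistic draws). For a symmetric matrix $B$, $\lambda_{\min}(B)$ is its smallest eigenvalue. *)

theory Defs
  imports "HOL-Analysis.Analysis"
begin

definition sigma :: "real \<Rightarrow> real" where
  "sigma a = 1 / (1 + exp (- a))"

definition loglik :: "nat \<Rightarrow> (nat \<Rightarrow> real^'d) \<Rightarrow> (nat \<Rightarrow> real) \<Rightarrow> real^'d \<Rightarrow> real" where
  "loglik n x y b = (\<Sum>i<n. y i * (x i \<bullet> b) - ln (1 + exp (x i \<bullet> b)))"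

definition FL :: "nat \<Rightarrow> (nat \<Rightarrow> real) \<Rightarrow> real \<Rightarrow> real" where
  "FL L z a = (\<Sum>l\<in>{1..L}. (if a \<ge> z l then 1 else 0)) / real L"

definition approx_grad :: "nat \<Rightarrow> (nat \<Rightarrow> real^'d) \<Rightarrow> (nat \<Rightarrow> real) \<Rightarrow> nat \<Rightarrow> (nat \<Rightarrow> real) \<Rightarrow> real^'d \<Rightarrow> real^'d" where
  "approx_grad n x y L z b = (\<Sum>i<n. y i *\<^sub>R x i - FL L z (x i \<bullet> b) *\<^sub>R x i)"

definition outer :: "real^'d \<Rightarrow> real^'d \<Rightarrow> real^'d^'d" where
  "outer u v = (\<chi> i j. u $ i * v $ j)"

definition hessian_loglik :: "nat \<Rightarrow> (nat \<Rightarrow> real^'d) \<Rightarrow> real^'d \<Rightarrow> real^'d^'d" where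
  "hessian_loglik n x b = - (\<Sum>i<n. (sigma (x i \<bullet> b) * (1 - sigma (x i \<bullet> b))) *\<^sub>R outer (x i) (x i))"

definition fisher_info :: "nat \<Rightarrow> (nat \<Rightarrow> real^'d) \<Rightarrow> real^'d \<Rightarrow> real^'d^'d" where
  "fisher_info n x b = - (1 / real n) *\<^sub>R hessian_loglik n x b"

definition lambda_min :: "real^'d^'d \<Rightarrow> real" where
  "lambda_min B = Inf {c. \<exists>v. v \<noteq> 0 \<and> B *v v = c *\<^sub>R v}"

end

theory Submission
  imports Defs
begin

text \<open>
  The gradient \<open>g(b) = \<Sum>\<^sub>i (y\<^sub>i - \<sigma>(x\<^sub>i\<bullet>b)) x\<^sub>i\<close> of the log-likelihood vanishes at
  the maximizer \<open>\<beta>\<^sub>0\<close>, and the derivative of \<open>g\<close> along a line is \<open>-n\<close> times the Fisher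
  information. The mean value theorem on the segment from \<open>\<beta>\<^sub>0\<close> to \<open>\<beta>\<close> thus gives
  \<open>-g(\<beta>)\<bullet>(\<beta> - \<beta>\<^sub>0) \<ge> n \<lambda>\<^sub>m\<^sub>i\<^sub>n \<parallel>\<beta> - \<beta>\<^sub>0\<parallel>\<^sup>2\<close>, and Cauchy-Schwarz yields
  \<open>n \<lambda>\<^sub>m\<^sub>i\<^sub>n \<parallel>\<beta> - \<beta>\<^sub>0\<parallel> \<le> \<parallel>g(\<beta>)\<parallel>\<close>. Finally \<open>g(\<beta>)\<close> differs from the approximate
  gradient only by \<open>\<sigma>\<close> being replaced by \<open>F\<^sub>L\<close>, which costs at most \<open>n R sup |F\<^sub>L - \<sigma>|\<close>.
\<close>

lemma linear_coeff_eq_0_if_quadratic_nonneg: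
  fixes a K :: real
  assumes nonneg: "\<And>t. 0 \<le> a * t + K * t\<^sup>2"
  shows "a = 0"
proof -
  define c where "c = \<bar>K\<bar> + 1"
  have c: "c > 0" by (simp add: c_def add_pos_nonneg)
  have "0 \<le> c\<^sup>2 * (a * (- a / c) + K * (- a / c)\<^sup>2)"
    using nonneg[of "- a / c"] by simp
  also have "\<dots> = a\<^sup>2 * (K - c)"
    using c by (simp add: field_simps power2_eq_square)
  also have "\<dots> \<le> - a\<^sup>2"
    using mult_right_mono[of K "\<bar>K\<bar>" "a\<^sup>2"] by (simp add: c_def algebra_simps)
  finally show ?thesis by simp
qed

lemma symmetric_matrix_inner_commute:
  fixes B :: "real^'n^'n"
  assumes "transpose B = B"
  shows "u \<bullet> (B *v v) = v \<bullet> (B *v u)"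
  by (metis assms dot_lmul_matrix inner_commute transpose_matrix_vector)

lemma rayleigh_minimizer_is_eigenvector:
  fixes B :: "real^'n^'n"
  assumes sym: "transpose B = B"
    and lower: "\<And>v. m * (norm v)\<^sup>2 \<le> v \<bullet> (B *v v)"
    and attained: "u \<bullet> (B *v u) = m * (norm u)\<^sup>2"
  shows "B *v u = m *\<^sub>R u"
proof -
  define r where "r = B *v u - m *\<^sub>R u"
  have cross: "r \<bullet> (B *v u) = r \<bullet> r + m * (u \<bullet> r)"
  proof -
    have "r \<bullet> (B *v u) = r \<bullet> (r + m *\<^sub>R u)"
      by (simp add: r_def)
    then show ?thesis
      by (simp add: inner_add_right inner_commute)
  qed
  have "0 \<le> (2 * (r \<bullet> r)) * t + (r \<bullet> (B *v r) - m * (r \<bullet> r)) * t\<^sup>2" for t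
  proof -
    have "(u + t *\<^sub>R r) \<bullet> (B *v (u + t *\<^sub>R r))
        = u \<bullet> (B *v u) + 2 * t * (r \<bullet> (B *v u)) + t\<^sup>2 * (r \<bullet> (B *v r))"
      using symmetric_matrix_inner_commute[OF sym, of u r]
      by (simp add: algebra_simps power2_eq_square)
    moreover have "(norm (u + t *\<^sub>R r))\<^sup>2 = (norm u)\<^sup>2 + 2 * t * (u \<bullet> r) + t\<^sup>2 * (r \<bullet> r)"
      unfolding power2_norm_eq_inner by (simp add: algebra_simps inner_commute power2_eq_square)
    ultimately show ?thesis
      using lower[of "u + t *\<^sub>R r"] attained cross by (simp add: algebra_simps)
  qed
  then have "2 * (r \<bullet> r) = 0"
    by (rule linear_coeff_eq_0_if_quadratic_nonneg)
  then show ?thesis by (simp add: r_def)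
qed

lemma quadratic_form_attains_min_on_sphere:
  fixes B :: "real^'n^'n"
  obtains u where "norm u = 1" "\<And>v. (u \<bullet> (B *v u)) * (norm v)\<^sup>2 \<le> v \<bullet> (B *v v)"
proof -
  define q where "q v = v \<bullet> (B *v v)" for v :: "real^'n"
  have "continuous_on (sphere 0 1) q"
    unfolding q_def by (intro continuous_intros linear_continuous_on) (auto intro: linear_linear)
  moreover have "sphere (0::real^'n) 1 \<noteq> {}"
    using norm_axis_1[where 'a='n] by (metis mem_sphere_0 empty_iff)
  ultimately obtain u where u: "norm u = 1" and min: "\<And>w. norm w = 1 \<Longrightarrow> q u \<le> q w"
    using continuous_attains_inf[OF compact_sphere] by (metis mem_sphere_0)
  have "q u * (norm v)\<^sup>2 \<le> q v" for v
  proof (cases "v = 0")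
    case False
    have "q u \<le> q ((1 / norm v) *\<^sub>R v)"
      using False by (intro min) simp
    also have "\<dots> = q v / (norm v)\<^sup>2"
      by (simp add: q_def matrix_vector_mult_scaleR power2_eq_square)
    finally show ?thesis
      using False by (simp add: field_simps)
  qed (simp add: q_def)
  with u show thesis
    by (intro that) (auto simp: q_def)
qed

lemma lambda_min_attained:
  fixes B :: "real^'n^'n"
  assumes sym: "transpose B = B"
  obtains u where "u \<noteq> 0" "B *v u = lambda_min B *\<^sub>R u"
    "\<And>v. lambda_min B * (norm v)\<^sup>2 \<le> v \<bullet> (B *v v)"
proof -
  obtain u where u: "norm u = 1" and lower: "\<And>v. (u \<bullet> (B *v u)) * (norm v)\<^sup>2 \<le> v \<bullet> (B *v v)"
    using quadratic_form_attains_min_on_sphere[of B] by blast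
  define m where "m = u \<bullet> (B *v u)"
  have eigen: "B *v u = m *\<^sub>R u"
    using sym lower u by (intro rayleigh_minimizer_is_eigenvector) (auto simp: m_def)
  have "m \<le> c" if "v \<noteq> 0" "B *v v = c *\<^sub>R v" for v c
  proof -
    have "m * (norm v)\<^sup>2 \<le> c * (norm v)\<^sup>2"
      using lower[of v] that(2) by (simp add: m_def power2_norm_eq_inner)
    then show ?thesis
      using that(1) by simp
  qed
  moreover have u_nonzero: "u \<noteq> 0"
    using u by auto
  ultimately have lam: "lambda_min B = m"
    unfolding lambda_min_def using eigen by (intro cInf_eq_minimum) auto
  show thesis
  proof (rule that)
    show "u \<noteq> 0" by (fact u_nonzero)
    show "B *v u = lambda_min B *\<^sub>R u"
      using eigen lam by simp
    show "lambda_min B * (norm v)\<^sup>2 \<le> v \<bullet> (B *v v)" for v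
      using lower[of v] lam by (simp add: m_def)
  qed
qed

lemma lambda_min_le_quadratic_form:
  fixes B :: "real^'n^'n"
  assumes "transpose B = B"
  shows "lambda_min B * (norm v)\<^sup>2 \<le> v \<bullet> (B *v v)"
  using lambda_min_attained[OF assms] by metis

lemma lambda_min_nonneg:
  fixes B :: "real^'n^'n"
  assumes "transpose B = B" and psd: "\<And>v. 0 \<le> v \<bullet> (B *v v)"
  shows "0 \<le> lambda_min B"
proof -
  obtain u where u: "u \<noteq> 0" "B *v u = lambda_min B *\<^sub>R u"
    using lambda_min_attained[OF assms(1)] by metis
  have "0 \<le> lambda_min B * (u \<bullet> u)"
    using psd[of u] u(2) by simp
  moreover have "0 < u \<bullet> u"
    using u(1) by simp
  ultimately show ?thesis
    by (simp add: zero_le_mult_iff)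
qed

lemma lambda_min_zero: "lambda_min (0::real^'n^'n) = 0"
proof -
  have "{c. \<exists>v. v \<noteq> 0 \<and> (0::real^'n^'n) *v v = c *\<^sub>R v} = {0}"
    by (auto intro!: exI[of _ "axis undefined (1::real)"])
  then show ?thesis by (simp add: lambda_min_def)
qed

lemma sigma_pos: "0 < sigma a"
  and sigma_less_1: "sigma a < 1"
  unfolding sigma_def by (auto simp: add_pos_pos)

lemma has_real_derivative_sigma: "(sigma has_real_derivative sigma a * (1 - sigma a)) (at a)"
proof -
  have pos: "0 < 1 + exp (- a)"
    by (simp add: add_pos_pos)
  have "(sigma has_real_derivative exp (- a) / (1 + exp (- a))\<^sup>2) (at a)"
    unfolding sigma_def[abs_def] using pos
    by (auto intro!: derivative_eq_intros simp: power2_eq_square)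
  moreover have "exp (- a) / (1 + exp (- a))\<^sup>2 = sigma a * (1 - sigma a)"
    unfolding sigma_def using pos by (simp add: field_simps power2_eq_square)
  ultimately show ?thesis by simp
qed

lemma has_real_derivative_ln_1_plus_exp: "((\<lambda>a. ln (1 + exp a)) has_real_derivative sigma a) (at a)"
proof -
  have "((\<lambda>a. ln (1 + exp a)) has_real_derivative exp a / (1 + exp a)) (at a)"
    by (auto intro!: derivative_eq_intros simp: add_pos_pos)
  moreover have "exp a / (1 + exp a) = sigma a"
    unfolding sigma_def by (simp add: field_simps exp_minus add_pos_pos)
  ultimately show ?thesis by simp
qed

lemma DERIV_sigma_chain [derivative_intros]:
  "(f has_real_derivative f') (at t within S) \<Longrightarrow>
    ((\<lambda>t. sigma (f t)) has_real_derivative sigma (f t) * (1 - sigma (f t)) * f') (at t within S)"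
  using DERIV_chain'[OF _ has_real_derivative_sigma] by (simp add: mult.commute)

lemma DERIV_ln_1_plus_exp_chain [derivative_intros]:
  "(f has_real_derivative f') (at t within S) \<Longrightarrow>
    ((\<lambda>t. ln (1 + exp (f t))) has_real_derivative sigma (f t) * f') (at t within S)"
  using DERIV_chain'[OF _ has_real_derivative_ln_1_plus_exp] by (simp add: mult.commute)

definition loglik_grad :: "nat \<Rightarrow> (nat \<Rightarrow> real^'d) \<Rightarrow> (nat \<Rightarrow> real) \<Rightarrow> real^'d \<Rightarrow> real^'d" where
  "loglik_grad n x y b = (\<Sum>i<n. (y i - sigma (x i \<bullet> b)) *\<^sub>R x i)"

lemma has_real_derivative_loglik_along_line:
  "((\<lambda>t. loglik n x y (b + t *\<^sub>R w)) has_real_derivative loglik_grad n x y (b + t *\<^sub>R w) \<bullet> w) (at t)"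
  unfolding loglik_def loglik_grad_def inner_sum_left
  by (auto intro!: derivative_eq_intros sum.cong simp: inner_add_right algebra_simps inner_commute)

lemma loglik_grad_eq_0_at_maximizer:
  assumes "\<And>b. loglik n x y b \<le> loglik n x y bmax"
  shows "loglik_grad n x y bmax = 0"
proof -
  define g where "g = loglik_grad n x y bmax"
  have "((\<lambda>t. loglik n x y (bmax + t *\<^sub>R g)) has_real_derivative g \<bullet> g) (at 0)"
    using has_real_derivative_loglik_along_line[where b = bmax and w = g and t = 0] by (simp add: g_def)
  then have "g \<bullet> g = 0"
    by (rule DERIV_local_max[OF _ zero_less_one]) (simp add: assms)
  then show ?thesis by (simp add: g_def)
qed

lemma outer_mult_vector: "outer u v *v w = (v \<bullet> w) *\<^sub>R u"
  unfolding vec_eq_iff outer_def matrix_vector_mult_def inner_vec_def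
  by (simp add: sum_distrib_left mult_ac)

lemma matrix_vector_mult_sum_left:
  fixes A :: "'i \<Rightarrow> real^'n^'m"
  shows "finite S \<Longrightarrow> sum A S *v v = (\<Sum>i\<in>S. A i *v v)"
  by (induction S rule: finite_induct) (auto simp: matrix_vector_mult_add_rdistrib)

lemma inner_fisher_info:
  "w \<bullet> (fisher_info n x b *v w)
    = (\<Sum>i<n. sigma (x i \<bullet> b) * (1 - sigma (x i \<bullet> b)) * (x i \<bullet> w)\<^sup>2) / real n"
  unfolding fisher_info_def hessian_loglik_def
  by (simp add: scaleR_matrix_vector_assoc[symmetric] matrix_vector_mult_sum_left outer_mult_vector
      inner_sum_right sum_negf power2_eq_square algebra_simps inner_commute)

lemma fisher_info_symmetric: "transpose (fisher_info n x b) = fisher_info n x b"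
  unfolding vec_eq_iff transpose_def fisher_info_def hessian_loglik_def outer_def
  by (simp add: mult.commute)

lemma fisher_info_psd: "0 \<le> w \<bullet> (fisher_info n x b *v w)"
  unfolding inner_fisher_info using sigma_pos sigma_less_1
  by (intro divide_nonneg_nonneg sum_nonneg mult_nonneg_nonneg) (auto simp: less_imp_le)

lemma has_real_derivative_loglik_grad_along_line:
  "((\<lambda>t. loglik_grad n x y (b + t *\<^sub>R w) \<bullet> w)
    has_real_derivative - real n * (w \<bullet> (fisher_info n x (b + t *\<^sub>R w) *v w))) (at t)"
proof -
  have "((\<lambda>t. loglik_grad n x y (b + t *\<^sub>R w) \<bullet> w) has_real_derivative
      (\<Sum>i<n. - (sigma (x i \<bullet> (b + t *\<^sub>R w)) * (1 - sigma (x i \<bullet> (b + t *\<^sub>R w))) * (x i \<bullet> w)\<^sup>2))) (at t)"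
    unfolding loglik_grad_def inner_sum_left
    by (auto intro!: derivative_eq_intros sum.cong simp: inner_add_right power2_eq_square)
  moreover have "(\<Sum>i<n. - (sigma (x i \<bullet> (b + t *\<^sub>R w)) * (1 - sigma (x i \<bullet> (b + t *\<^sub>R w))) * (x i \<bullet> w)\<^sup>2))
      = - real n * (w \<bullet> (fisher_info n x (b + t *\<^sub>R w) *v w))"
    by (cases "n = 0") (simp_all add: inner_fisher_info sum_negf)
  ultimately show ?thesis by simp
qed

lemma loglik_grad_mean_value:
  obtains \<xi> where "0 < \<xi>" "\<xi> < 1"
    "(loglik_grad n x y b1 - loglik_grad n x y b0) \<bullet> (b1 - b0)
      = - real n * ((b1 - b0) \<bullet> (fisher_info n x (\<xi> *\<^sub>R b1 + (1 - \<xi>) *\<^sub>R b0) *v (b1 - b0)))"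
proof -
  define d where "d = b1 - b0"
  define h where "h t = loglik_grad n x y (b0 + t *\<^sub>R d) \<bullet> d" for t
  define h' where "h' t = - real n * (d \<bullet> (fisher_info n x (b0 + t *\<^sub>R d) *v d))" for t
  have "(h has_real_derivative h' t) (at t)" for t
    unfolding h_def h'_def by (rule has_real_derivative_loglik_grad_along_line)
  then obtain \<xi> where \<xi>: "0 < \<xi>" "\<xi> < 1"
      and "h 1 - h 0 = (1 - 0) * h' \<xi>"
    using MVT2[OF zero_less_one] by metis
  moreover have "b0 + \<xi> *\<^sub>R d = \<xi> *\<^sub>R b1 + (1 - \<xi>) *\<^sub>R b0"
    by (simp add: d_def algebra_simps)
  ultimately show thesis
    by (intro that[OF \<xi>]) (simp add: h_def h'_def d_def inner_diff_left)
qed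

lemma loglik_grad_inner_le_curvature:
  assumes max: "\<And>b. loglik n x y b \<le> loglik n x y bmax"
  shows "real n * (INF a\<in>{0..1}. lambda_min (fisher_info n x (a *\<^sub>R b + (1 - a) *\<^sub>R bmax)))
      * (norm (b - bmax))\<^sup>2 \<le> - (loglik_grad n x y b \<bullet> (b - bmax))"
proof -
  define d where "d = b - bmax"
  obtain \<xi> where \<xi>: "0 < \<xi>" "\<xi> < 1" and mean:
      "(loglik_grad n x y b - loglik_grad n x y bmax) \<bullet> d
        = - real n * (d \<bullet> (fisher_info n x (\<xi> *\<^sub>R b + (1 - \<xi>) *\<^sub>R bmax) *v d))"
    unfolding d_def by (rule loglik_grad_mean_value)
  define lam where
    "lam = (INF a\<in>{0..1}. lambda_min (fisher_info n x (a *\<^sub>R b + (1 - a) *\<^sub>R bmax)))"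
  define F where "F = fisher_info n x (\<xi> *\<^sub>R b + (1 - \<xi>) *\<^sub>R bmax)"
  have "bdd_below ((\<lambda>a. lambda_min (fisher_info n x (a *\<^sub>R b + (1 - a) *\<^sub>R bmax))) ` {0..1})"
    by (intro bdd_belowI2[where m = 0] lambda_min_nonneg fisher_info_symmetric fisher_info_psd)
  then have "lam \<le> lambda_min F"
    unfolding lam_def F_def by (rule cINF_lower) (use \<xi> in auto)
  then have "lam * (norm d)\<^sup>2 \<le> lambda_min F * (norm d)\<^sup>2"
    by (rule mult_right_mono) simp
  also have "\<dots> \<le> d \<bullet> (F *v d)"
    unfolding F_def by (rule lambda_min_le_quadratic_form[OF fisher_info_symmetric])
  finally have "real n * lam * (norm d)\<^sup>2 \<le> real n * (d \<bullet> (F *v d))"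
    by (simp add: mult_left_mono mult.assoc)
  also have "\<dots> = - (loglik_grad n x y b \<bullet> d)"
    using mean loglik_grad_eq_0_at_maximizer[OF max] by (simp add: F_def)
  finally show ?thesis
    by (simp add: lam_def d_def)
qed

lemma norm_sub_maximizer_le:
  assumes max: "\<And>b. loglik n x y b \<le> loglik n x y bmax"
  shows "real n * (INF a\<in>{0..1}. lambda_min (fisher_info n x (a *\<^sub>R b + (1 - a) *\<^sub>R bmax)))
      * norm (b - bmax) \<le> norm (loglik_grad n x y b)"
proof (cases "b = bmax")
  case False
  define c where
    "c = real n * (INF a\<in>{0..1}. lambda_min (fisher_info n x (a *\<^sub>R b + (1 - a) *\<^sub>R bmax)))"
  have "(c * norm (b - bmax)) * norm (b - bmax) = c * (norm (b - bmax))\<^sup>2"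
    by (simp add: power2_eq_square)
  also have "\<dots> \<le> - (loglik_grad n x y b \<bullet> (b - bmax))"
    unfolding c_def using max by (rule loglik_grad_inner_le_curvature)
  also have "\<dots> \<le> norm (loglik_grad n x y b) * norm (b - bmax)"
    using Cauchy_Schwarz_ineq2[of "loglik_grad n x y b" "b - bmax"] by linarith
  finally show ?thesis
    using False by (simp add: c_def)
qed simp

lemma FL_nonneg: "0 \<le> FL L z a"
  by (simp add: FL_def sum_nonneg)

lemma FL_le_1: "FL L z a \<le> 1"
proof -
  have "(\<Sum>l\<in>{1..L}. if z l \<le> a then 1 else 0) \<le> (\<Sum>l\<in>{1..L}. 1::real)"
    by (rule sum_mono) simp
  then show ?thesis
    by (cases "L = 0") (simp_all add: FL_def)
qed

lemma norm_loglik_grad_minus_approx_grad_le: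
  assumes bound: "\<forall>i<n. norm (x i) \<le> R"
  shows "norm (loglik_grad n x y b - approx_grad n x y L z b)
    \<le> real n * R * (SUP a. \<bar>FL L z a - sigma a\<bar>)"
proof -
  define S where "S = (SUP a. \<bar>FL L z a - sigma a\<bar>)"
  have "\<bar>FL L z a - sigma a\<bar> \<le> 1" for a
    using FL_nonneg[of L z a] FL_le_1[of L z a] sigma_pos[of a] sigma_less_1[of a] by auto
  then have "bdd_above (range (\<lambda>a. \<bar>FL L z a - sigma a\<bar>))"
    by (intro bdd_aboveI2)
  then have S: "\<bar>FL L z a - sigma a\<bar> \<le> S" for a
    unfolding S_def by (rule cSUP_upper[OF UNIV_I])
  have "loglik_grad n x y b - approx_grad n x y L z b
      = (\<Sum>i<n. (FL L z (x i \<bullet> b) - sigma (x i \<bullet> b)) *\<^sub>R x i)"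
    unfolding loglik_grad_def approx_grad_def
    by (simp add: sum_subtractf[symmetric] algebra_simps)
  also have "norm \<dots> \<le> (\<Sum>i<n. \<bar>FL L z (x i \<bullet> b) - sigma (x i \<bullet> b)\<bar> * norm (x i))"
    by (rule order_trans[OF norm_sum]) simp
  also have "\<dots> \<le> (\<Sum>i<n. S * R)"
    using S bound order_trans[OF abs_ge_zero S]
    by (intro sum_mono mult_mono) auto
  finally show ?thesis
    by (simp add: S_def mult_ac)
qed

theorem lemma3:
  fixes n L :: nat and x :: "nat \<Rightarrow> real^'d" and y z :: "nat \<Rightarrow> real"
    and R :: real and beta betahat :: "real^'d"
  assumes y01: "\<forall>i<n. y i \<in> {0, 1}"
    and Rpos: "R > 0"
    and xbound: "\<forall>i<n. norm (x i) \<le> R"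
    and maxim: "\<forall>b. loglik n x y b \<le> loglik n x y betahat"
    and L1: "L \<ge> 1"
    and grad: "norm (approx_grad n x y L z beta) \<le> real n * R / real L"
    and lampos: "(INF a\<in>{0..1}. lambda_min (fisher_info n x (a *\<^sub>R beta + (1 - a) *\<^sub>R betahat))) > 0"
  shows "norm (beta - betahat) \<le>
    R * (1 / real L + (SUP a. \<bar>FL L z a - sigma a\<bar>))
      / (INF a\<in>{0..1}. lambda_min (fisher_info n x (a *\<^sub>R beta + (1 - a) *\<^sub>R betahat)))"
proof -
  define lam where
    "lam = (INF a\<in>{0..1}. lambda_min (fisher_info n x (a *\<^sub>R beta + (1 - a) *\<^sub>R betahat)))"
  define S where "S = (SUP a. \<bar>FL L z a - sigma a\<bar>)"
  have "n \<noteq> 0"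
  proof
    assume "n = 0"
    then have "fisher_info n x b = 0" for b
      by (simp add: fisher_info_def)
    then show False
      using lampos by (simp add: lambda_min_zero)
  qed
  have "real n * lam * norm (beta - betahat) \<le> norm (loglik_grad n x y beta)"
    unfolding lam_def using maxim by (intro norm_sub_maximizer_le) blast
  also have "\<dots> \<le> real n * (R * (1 / real L + S))"
    using norm_triangle_sub[of "loglik_grad n x y beta" "approx_grad n x y L z beta"] grad
      norm_loglik_grad_minus_approx_grad_le[OF xbound, of y beta L z]
    by (simp add: S_def algebra_simps)
  finally have "lam * norm (beta - betahat) \<le> R * (1 / real L + S)"
    using \<open>n \<noteq> 0\<close> by (simp add: mult.assoc)
  then show ?thesis
    using lampos by (simp add: lam_def S_def pos_le_divide_eq mult.commute)
qed

end
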